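(* For each $2p\in\{50, 98, 170, 242, 290, 338\}$ there exists a cyclic DCA$(4,2p+1;2p)$ satisfying P1 and P2.
   Context: A difference covering array DCA$(k,\eta;n)$ over $\mathbb{Z}_n$ (a cyclic DCA) is an $\eta\times k$ matrix $Q=[q(i,j)]$ with entries in $\mathbb{Z}_n$ such that for every pair of distinct columns $j,j'$ the multiset $\{q(i,j)-q(i,j') : 0\le i\le \eta-1\}$ contains every element of $\mathbb{Z}_n$ at least once. A DCA$(k,n+1;n)$ is taken in normalized form: all entries of its last row (row $n$) and last column (column $k-1$) equal $0$. It satisfies P1 if $0$ occurs at least twice in every column, and P2 if for all distinct columns $j,j'$ with $j\neq k-1\neq j'$, the set $\{q(i,j)-q(i,j') : 0\le i\le n-1\}$ equals $\mathbb{Z}_n\setminus\{0\}$. *)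

theory Defs
  imports Main
begin

text \<open>An eta x k matrix over Z_n is represented as Q :: nat => nat => int,
  where Q i j is the entry in row i (i < eta) and column j (j < k);
  entries are taken as representatives in {0..<n}, and differences are
  computed modulo n.\<close>

definition is_DCA :: "nat \<Rightarrow> nat \<Rightarrow> nat \<Rightarrow> (nat \<Rightarrow> nat \<Rightarrow> int) \<Rightarrow> bool" where
  "is_DCA k eta n Q \<longleftrightarrow>
     (\<forall>i<eta. \<forall>j<k. Q i j \<in> {0..<int n}) \<and>
     (\<forall>j<k. \<forall>j'<k. j \<noteq> j' \<longrightarrow>
        (\<forall>d\<in>{0..<int n}. \<exists>i<eta. (Q i j - Q i j') mod int n = d))"

definition normalized_DCA :: "nat \<Rightarrow> nat \<Rightarrow> (nat \<Rightarrow> nat \<Rightarrow> int) \<Rightarrow> bool" where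
  "normalized_DCA k n Q \<longleftrightarrow>
     is_DCA k (n + 1) n Q \<and>
     (\<forall>j<k. Q n j = 0) \<and> (\<forall>i\<le>n. Q i (k - 1) = 0)"

definition DCA_P1 :: "nat \<Rightarrow> nat \<Rightarrow> (nat \<Rightarrow> nat \<Rightarrow> int) \<Rightarrow> bool" where
  "DCA_P1 k n Q \<longleftrightarrow> (\<forall>j<k. card {i. i \<le> n \<and> Q i j = 0} \<ge> 2)"

definition DCA_P2 :: "nat \<Rightarrow> nat \<Rightarrow> (nat \<Rightarrow> nat \<Rightarrow> int) \<Rightarrow> bool" where
  "DCA_P2 k n Q \<longleftrightarrow>
     (\<forall>j<k - 1. \<forall>j'<k - 1. j \<noteq> j' \<longrightarrow>
        (\<lambda>i. (Q i j - Q i j') mod int n) ` {0..<n} = {1..<int n})"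

end

theory Submission
  imports Defs
begin

text \<open>Fill rows \<open>0..n-1\<close> of the first three columns with permutations \<open>a, b, c\<close> of \<open>\<int>\<^sub>n\<close>
  such that each of \<open>a - b\<close>, \<open>a - c\<close>, \<open>b - c\<close> takes every nonzero residue, and make the last
  row and the last column zero. Between two of the first three columns the differences then
  cover \<open>\<int>\<^sub>n \<setminus> {0}\<close> in rows \<open>0..n-1\<close>, which is P2, and the zero last row adds the difference
  \<open>0\<close>; against the zero column the differences are the column itself, a permutation. Each column
  has a zero in row \<open>n\<close> and, being a permutation, one above it, which is P1. For the six orders
  the permutations are exhibited explicitly and checked by sorting.\<close>

definition bordered_array :: "nat \<Rightarrow> nat \<Rightarrow> (nat \<Rightarrow> nat \<Rightarrow> int) \<Rightarrow> nat \<Rightarrow> nat \<Rightarrow> int" where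
  "bordered_array k n f = (\<lambda>i j. if i < n \<and> j < k - 1 then f j i else 0)"

lemma uminus_mod_image_nonzero_residues:
  "(\<lambda>d. (- d) mod int n) ` {1..<int n} = {1..<int n}"
proof -
  have "(- d) mod int n = int n - d" if "d \<in> {1..<int n}" for d
    using that by (simp add: zmod_zminus1_eq_if)
  then have "(\<lambda>d. (- d) mod int n) ` {1..<int n} = (\<lambda>d. int n - d) ` {1..<int n}"
    by (rule image_cong[OF refl])
  also have "\<dots> = {1..<int n}"
    by auto
  finally show ?thesis .
qed

lemma image_diff_mod_swap:
  assumes "(\<lambda>i. (x i - y i) mod int n) ` S = {1..<int n}"
  shows "(\<lambda>i. (y i - x i) mod int n) ` S = {1..<int n}"
proof -
  have "(\<lambda>i. (y i - x i) mod int n) = (\<lambda>d. (- d) mod int n) \<circ> (\<lambda>i. (x i - y i) mod int n)"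
    by (auto simp: mod_minus_eq)
  then show ?thesis
    by (simp only: image_comp[symmetric] assms uminus_mod_image_nonzero_residues)
qed

lemma bordered_array_entries:
  assumes "n \<ge> 1" and "\<And>j. j < k - 1 \<Longrightarrow> f j ` {0..<n} = {0..<int n}"
    and "i \<le> n" and "j < k"
  shows "bordered_array k n f i j \<in> {0..<int n}"
  using assms by (fastforce simp: bordered_array_def)

lemma bordered_array_differences:
  assumes "n \<ge> 1"
    and perm: "\<And>j. j < k - 1 \<Longrightarrow> f j ` {0..<n} = {0..<int n}"
    and diff: "\<And>j j'. j < k - 1 \<Longrightarrow> j' < k - 1 \<Longrightarrow> j \<noteq> j' \<Longrightarrow>
          (\<lambda>i. (f j i - f j' i) mod int n) ` {0..<n} = {1..<int n}"
    and "j < k" "j' < k" "j \<noteq> j'" and d: "d \<in> {0..<int n}"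
  shows "\<exists>i<n + 1. (bordered_array k n f i j - bordered_array k n f i j') mod int n = d"
proof -
  consider "d = 0" | "j < k - 1" "j' < k - 1" "d \<noteq> 0" | "j' = k - 1" "j < k - 1"
    | "j = k - 1" "j' < k - 1" "d \<noteq> 0"
    using \<open>j < k\<close> \<open>j' < k\<close> \<open>j \<noteq> j'\<close> by linarith
  then show ?thesis
  proof cases
    case 1
    then show ?thesis by (intro exI[of _ n]) (simp add: bordered_array_def)
  next
    case 2
    then have "d \<in> (\<lambda>i. (f j i - f j' i) mod int n) ` {0..<n}"
      using diff[of j j'] \<open>j \<noteq> j'\<close> d by auto
    then obtain i where "i < n" "(f j i - f j' i) mod int n = d"
      by auto
    with 2 show ?thesis by (intro exI[of _ i]) (simp add: bordered_array_def)
  next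
    case 3
    then have "d \<in> f j ` {0..<n}"
      using perm[of j] d by auto
    then obtain i where "i < n" "f j i = d"
      by auto
    with 3 d show ?thesis by (intro exI[of _ i]) (simp add: bordered_array_def)
  next
    case 4
    then have "int n - d \<in> f j' ` {0..<n}"
      using perm[of j'] d by auto
    then obtain i where "i < n" "f j' i = int n - d"
      by auto
    with 4 d show ?thesis by (intro exI[of _ i]) (simp add: bordered_array_def)
  qed
qed

lemma normalized_DCA_bordered_array:
  assumes "n \<ge> 1"
    and "\<And>j. j < k - 1 \<Longrightarrow> f j ` {0..<n} = {0..<int n}"
    and "\<And>j j'. j < k - 1 \<Longrightarrow> j' < k - 1 \<Longrightarrow> j \<noteq> j' \<Longrightarrow>
          (\<lambda>i. (f j i - f j' i) mod int n) ` {0..<n} = {1..<int n}"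
  shows "normalized_DCA k n (bordered_array k n f)"
proof -
  have "is_DCA k (n + 1) n (bordered_array k n f)"
    unfolding is_DCA_def
    using bordered_array_entries[OF assms(1,2)] bordered_array_differences[OF assms] by auto
  then show ?thesis
    unfolding normalized_DCA_def by (simp add: bordered_array_def)
qed

lemma DCA_P1_bordered_array:
  assumes "n \<ge> 1" and perm: "\<And>j. j < k - 1 \<Longrightarrow> f j ` {0..<n} = {0..<int n}"
  shows "DCA_P1 k n (bordered_array k n f)"
  unfolding DCA_P1_def
proof (intro allI impI)
  fix j assume "j < k"
  let ?zeros = "{i. i \<le> n \<and> bordered_array k n f i j = 0}"
  obtain i where "i < n" "bordered_array k n f i j = 0"
  proof (cases "j < k - 1")
    case True
    then have "0 \<in> f j ` {0..<n}"
      using perm \<open>n \<ge> 1\<close> by auto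
    then show ?thesis
      using that True by (auto simp: bordered_array_def)
  next
    case False
    then show ?thesis
      using that[of 0] \<open>n \<ge> 1\<close> by (simp add: bordered_array_def)
  qed
  then have "{i, n} \<subseteq> ?zeros"
    by (auto simp: bordered_array_def)
  from card_mono[OF _ this] \<open>i < n\<close> show "2 \<le> card ?zeros"
    by simp
qed

lemma DCA_P2_bordered_array:
  assumes "\<And>j j'. j < k - 1 \<Longrightarrow> j' < k - 1 \<Longrightarrow> j \<noteq> j' \<Longrightarrow>
          (\<lambda>i. (f j i - f j' i) mod int n) ` {0..<n} = {1..<int n}"
  shows "DCA_P2 k n (bordered_array k n f)"
  unfolding DCA_P2_def
proof (intro allI impI)
  fix j j' assume "j < k - 1" "j' < k - 1" "j \<noteq> j'"
  then have "(\<lambda>i. (bordered_array k n f i j - bordered_array k n f i j') mod int n) ` {0..<n}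
      = (\<lambda>i. (f j i - f j' i) mod int n) ` {0..<n}"
    by (intro image_cong) (simp_all add: bordered_array_def)
  with assms[of j j'] \<open>j < k - 1\<close> \<open>j' < k - 1\<close> \<open>j \<noteq> j'\<close>
  show "(\<lambda>i. (bordered_array k n f i j - bordered_array k n f i j') mod int n) ` {0..<n}
      = {1..<int n}"
    by simp
qed

text \<open>The library's insertion sort is too slow under \<open>code_simp\<close> for columns of length 338.\<close>

fun merge :: "int list \<Rightarrow> int list \<Rightarrow> int list" where
  "merge [] ys = ys"
| "merge xs [] = xs"
| "merge (x # xs) (y # ys) =
    (if x \<le> y then x # merge xs (y # ys) else y # merge (x # xs) ys)"

fun msort :: "int list \<Rightarrow> int list" where
  "msort xs =
    (if length xs \<le> 1 then xs
     else merge (msort (take (length xs div 2) xs)) (msort (drop (length xs div 2) xs)))"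

declare msort.simps [simp del]

lemma set_merge [simp]: "set (merge xs ys) = set xs \<union> set ys"
  by (induction xs ys rule: merge.induct) auto

lemma length_merge [simp]: "length (merge xs ys) = length xs + length ys"
  by (induction xs ys rule: merge.induct) auto

lemma set_msort [simp]: "set (msort xs) = set xs"
proof (induction xs rule: msort.induct)
  case (1 xs)
  then show ?case
    by (subst msort.simps) (simp flip: set_append)
qed

lemma length_msort [simp]: "length (msort xs) = length xs"
proof (induction xs rule: msort.induct)
  case (1 xs)
  then show ?case
    by (subst msort.simps) simp
qed

lemma set_map2_conv_nth:
  assumes "length ys = length xs"
  shows "set (map2 g xs ys) = (\<lambda>i. g (xs ! i) (ys ! i)) ` {0..<length xs}"
proof -
  have "set (map2 g xs ys) = (!) (map2 g xs ys) ` {0..<length xs}"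
    using nth_image[of "length xs" "map2 g xs ys"] assms by simp
  also have "\<dots> = (\<lambda>i. g (xs ! i) (ys ! i)) ` {0..<length xs}"
    using assms by (intro image_cong) auto
  finally show ?thesis .
qed

text \<open>\<open>cols\<close> lists the first \<open>k - 1\<close> columns, each as its entries in rows \<open>0..n-1\<close>.\<close>

definition difference_columns :: "nat \<Rightarrow> int list list \<Rightarrow> bool" where
  "difference_columns n cols \<longleftrightarrow>
     list_all (\<lambda>c. msort c = [0..int n - 1]) cols \<and>
     sorted_wrt (\<lambda>c c'. remdups_adj (msort (map2 (\<lambda>x y. (x - y) mod int n) c c')) = [1..int n - 1])
       cols"

lemma difference_columns_column:
  assumes "difference_columns n cols" and "c \<in> set cols"
  shows "length c = n" and "set c = {0..<int n}"
proof -
  have "msort c = [0..int n - 1]"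
    using assms unfolding difference_columns_def list_all_iff by (elim conjE bspec)
  then have "length (msort c) = length [0..int n - 1]" "set (msort c) = set [0..int n - 1]"
    by (simp_all only:)
  then show "length c = n" "set c = {0..<int n}"
    by (simp_all flip: atLeastLessThanPlusOne_atLeastAtMost_int)
qed

lemma difference_columns_differences:
  assumes cols: "difference_columns n cols" and "j < j'" and "j' < length cols"
  shows "(\<lambda>i. (cols ! j ! i - cols ! j' ! i) mod int n) ` {0..<n} = {1..<int n}"
proof -
  let ?g = "\<lambda>x y. (x - y) mod int n"
  have "j < length cols"
    using assms by simp
  then have lengths: "length (cols ! j) = n" "length (cols ! j') = n"
    using difference_columns_column(1)[OF cols] \<open>j' < length cols\<close> by simp_all
  have "(\<lambda>i. ?g (cols ! j ! i) (cols ! j' ! i)) ` {0..<n} = set (map2 ?g (cols ! j) (cols ! j'))"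
    using set_map2_conv_nth[of "cols ! j'" "cols ! j" ?g] lengths by simp
  also have "\<dots> = set (remdups_adj (msort (map2 ?g (cols ! j) (cols ! j'))))"
    by simp
  also have "\<dots> = set [1..int n - 1]"
    using cols[unfolded difference_columns_def, THEN conjunct2, unfolded sorted_wrt_iff_nth_less,
        rule_format, OF \<open>j < j'\<close> \<open>j' < length cols\<close>]
    by (simp only:)
  also have "\<dots> = {1..<int n}"
    by (simp flip: atLeastLessThanPlusOne_atLeastAtMost_int)
  finally show ?thesis .
qed

lemma exists_DCA_of_difference_columns:
  assumes "n \<ge> 1" and cols: "difference_columns n cols"
  defines "k \<equiv> length cols + 1"
  shows "\<exists>Q. normalized_DCA k n Q \<and> DCA_P1 k n Q \<and> DCA_P2 k n Q"
proof -
  define f where "f = (\<lambda>j i. cols ! j ! i)"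
  have perm: "f j ` {0..<n} = {0..<int n}" if "j < k - 1" for j
    using difference_columns_column[OF cols, of "cols ! j"] nth_image[of n "cols ! j"] that
    by (simp add: f_def k_def)
  have diff: "(\<lambda>i. (f j i - f j' i) mod int n) ` {0..<n} = {1..<int n}"
    if "j < k - 1" "j' < k - 1" "j \<noteq> j'" for j j'
  proof (cases "j < j'")
    case True
    with that show ?thesis
      unfolding f_def k_def by (simp add: difference_columns_differences[OF cols])
  next
    case False
    with that have "(\<lambda>i. (f j' i - f j i) mod int n) ` {0..<n} = {1..<int n}"
      unfolding f_def k_def by (simp add: difference_columns_differences[OF cols])
    then show ?thesis
      by (rule image_diff_mod_swap)
  qed
  show ?thesis
    using normalized_DCA_bordered_array[where f = f, OF \<open>n \<ge> 1\<close> perm diff]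
      DCA_P1_bordered_array[where f = f, OF \<open>n \<ge> 1\<close> perm]
      DCA_P2_bordered_array[where f = f, OF diff]
    by blast
qed

definition dca50_columns :: "int list list" where
  "dca50_columns =
    [[24, 0, 1, 27, 3, 29, 30, 6, 7, 8, 34, 10, 11, 12, 38, 39, 15, 41, 17, 18, 44, 45, 21, 47,
      23, 49, 25, 26, 2, 28, 4, 5, 31, 32, 33, 9, 35, 36, 37, 13, 14, 40, 16, 42, 43, 19, 20, 46,
      22, 48],
     [4, 2, 0, 48, 46, 44, 42, 40, 38, 36, 9, 32, 30, 28, 1, 24, 47, 45, 43, 16, 39, 12, 10, 33,
      31, 26, 49, 22, 20, 18, 41, 14, 37, 35, 8, 6, 29, 27, 25, 23, 21, 19, 17, 15, 13, 11, 34, 7,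
      5, 3],
     [30, 37, 19, 26, 33, 40, 22, 29, 11, 43, 25, 7, 14, 21, 28, 35, 17, 49, 31, 13, 20, 2, 9, 16,
      48, 47, 4, 36, 18, 0, 32, 39, 46, 3, 10, 42, 24, 6, 38, 45, 27, 34, 41, 23, 5, 12, 44, 1, 8,
      15]]"

definition dca98_columns :: "int list list" where
  "dca98_columns =
    [[96, 48, 49, 50, 2, 52, 53, 54, 55, 7, 57, 58, 10, 11, 12, 62, 14, 15, 16, 17, 67, 68, 69,
      21, 22, 72, 24, 74, 26, 27, 77, 29, 79, 31, 81, 33, 34, 35, 85, 86, 38, 39, 89, 41, 91, 43,
      93, 45, 46, 36, 37, 87, 88, 40, 90, 42, 92, 44, 94, 95, 47, 97, 0, 1, 51, 3, 4, 5, 6, 56, 8,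
      9, 59, 60, 61, 13, 63, 64, 65, 66, 18, 19, 20, 70, 71, 23, 73, 25, 75, 76, 28, 78, 30, 80,
      32, 82, 83, 84],
     [41, 86, 33, 78, 25, 70, 66, 62, 9, 5, 50, 46, 42, 38, 83, 79, 75, 71, 18, 63, 10, 55, 51,
      47, 43, 88, 84, 31, 27, 23, 19, 15, 11, 56, 52, 97, 93, 40, 36, 81, 77, 24, 69, 65, 12, 8,
      4, 0, 45, 72, 68, 64, 60, 7, 3, 48, 44, 89, 85, 32, 28, 73, 20, 16, 61, 57, 53, 49, 94, 90,
      37, 82, 29, 74, 21, 17, 13, 58, 54, 1, 95, 91, 87, 34, 30, 26, 22, 67, 14, 59, 6, 2, 96, 92,
      39, 35, 80, 76],
     [68, 80, 92, 55, 18, 79, 91, 5, 17, 29, 90, 53, 65, 28, 89, 52, 15, 27, 39, 51, 63, 26, 87,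
      1, 62, 25, 86, 0, 61, 73, 85, 97, 60, 23, 35, 47, 59, 22, 83, 95, 9, 21, 33, 45, 57, 69, 32,
      44, 7, 67, 2, 84, 19, 3, 36, 20, 4, 37, 70, 54, 38, 71, 6, 88, 72, 56, 40, 24, 8, 41, 74,
      58, 42, 75, 10, 43, 76, 11, 93, 77, 12, 94, 78, 13, 46, 30, 14, 96, 31, 64, 48, 81, 16, 49,
      82, 66, 50, 34]]"

definition dca170_columns :: "int list list" where
  "dca170_columns =
    [[36, 37, 38, 39, 40, 126, 127, 43, 44, 130, 131, 47, 48, 134, 50, 136, 52, 53, 139, 140, 56,
      142, 58, 59, 60, 146, 147, 148, 149, 150, 151, 152, 153, 154, 155, 71, 72, 158, 74, 160,
      161, 162, 163, 164, 80, 166, 82, 83, 84, 85, 86, 2, 88, 89, 5, 6, 7, 8, 94, 95, 96, 12, 98,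
      99, 15, 101, 102, 18, 104, 105, 106, 107, 23, 24, 110, 111, 112, 113, 29, 115, 116, 32, 33,
      119, 35, 93, 9, 10, 11, 97, 13, 14, 100, 16, 17, 103, 19, 20, 21, 22, 108, 109, 25, 26, 27,
      28, 114, 30, 31, 117, 118, 34, 120, 121, 122, 123, 124, 125, 41, 42, 128, 129, 45, 46, 132,
      133, 49, 135, 51, 137, 138, 54, 55, 141, 57, 143, 144, 145, 61, 62, 63, 64, 65, 66, 67, 68,
      69, 70, 156, 157, 73, 159, 75, 76, 77, 78, 79, 165, 81, 167, 168, 169, 0, 1, 87, 3, 4, 90,
      91, 92],
     [147, 25, 158, 36, 84, 132, 95, 58, 106, 69, 32, 80, 128, 6, 139, 102, 150, 28, 76, 39, 87,
      50, 13, 146, 109, 157, 120, 168, 46, 9, 142, 20, 68, 116, 164, 42, 90, 53, 101, 64, 27, 75,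
      38, 1, 49, 97, 145, 23, 156, 34, 82, 130, 93, 141, 104, 67, 30, 78, 126, 89, 137, 100, 63,
      111, 159, 122, 85, 133, 96, 144, 107, 70, 33, 81, 129, 92, 55, 103, 151, 114, 162, 125, 3,
      136, 14, 149, 112, 160, 123, 86, 134, 12, 60, 108, 71, 119, 167, 45, 8, 56, 19, 152, 115,
      163, 41, 4, 52, 15, 148, 26, 74, 37, 0, 48, 11, 59, 22, 155, 118, 166, 44, 7, 140, 18, 66,
      29, 77, 40, 88, 51, 99, 62, 110, 73, 121, 169, 47, 10, 143, 21, 154, 117, 165, 43, 91, 54,
      17, 65, 113, 161, 124, 2, 135, 98, 61, 24, 72, 35, 83, 131, 94, 57, 105, 153, 31, 79, 127,
      5, 138, 16],
     [163, 90, 102, 114, 126, 138, 150, 77, 89, 16, 113, 40, 52, 64, 161, 3, 15, 27, 39, 51, 148,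
      75, 2, 14, 111, 123, 50, 62, 74, 1, 13, 25, 37, 49, 61, 158, 85, 12, 109, 36, 133, 60, 157,
      84, 11, 23, 120, 132, 144, 156, 168, 10, 107, 34, 46, 58, 70, 82, 9, 106, 33, 130, 57, 154,
      81, 93, 105, 32, 44, 141, 68, 165, 7, 104, 116, 128, 140, 152, 79, 91, 103, 115, 42, 54,
      151, 63, 160, 87, 99, 26, 38, 135, 147, 159, 86, 98, 110, 122, 134, 146, 73, 0, 97, 24, 121,
      48, 145, 72, 169, 96, 108, 35, 47, 59, 71, 83, 95, 22, 119, 131, 143, 155, 167, 94, 21, 118,
      45, 142, 69, 166, 8, 20, 117, 129, 56, 153, 80, 92, 19, 31, 43, 55, 67, 164, 6, 18, 30, 127,
      139, 66, 78, 5, 17, 29, 41, 53, 65, 162, 4, 101, 28, 125, 137, 149, 76, 88, 100, 112, 124,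
      136]]"

definition dca242_columns :: "int list list" where
  "dca242_columns =
    [[62, 184, 64, 186, 187, 188, 68, 69, 70, 71, 193, 73, 195, 196, 197, 198, 78, 79, 201, 81,
      82, 83, 84, 85, 207, 87, 88, 210, 90, 212, 213, 93, 94, 95, 96, 97, 219, 220, 100, 101, 102,
      103, 225, 105, 106, 228, 108, 230, 110, 232, 233, 113, 235, 115, 116, 117, 118, 119, 241, 0,
      122, 2, 3, 4, 5, 6, 128, 129, 130, 10, 132, 133, 13, 14, 136, 137, 17, 18, 140, 141, 142,
      22, 144, 145, 25, 26, 148, 28, 150, 30, 31, 32, 154, 34, 35, 36, 37, 38, 160, 40, 162, 163,
      43, 44, 45, 46, 47, 169, 49, 50, 172, 173, 174, 54, 176, 177, 57, 58, 180, 181, 182, 112,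
      234, 114, 236, 237, 238, 239, 240, 120, 121, 1, 123, 124, 125, 126, 127, 7, 8, 9, 131, 11,
      12, 134, 135, 15, 16, 138, 139, 19, 20, 21, 143, 23, 24, 146, 147, 27, 149, 29, 151, 152,
      153, 33, 155, 156, 157, 158, 159, 39, 161, 41, 42, 164, 165, 166, 167, 168, 48, 170, 171,
      51, 52, 53, 175, 55, 56, 178, 179, 59, 60, 61, 183, 63, 185, 65, 66, 67, 189, 190, 191, 192,
      72, 194, 74, 75, 76, 77, 199, 200, 80, 202, 203, 204, 205, 206, 86, 208, 209, 89, 211, 91,
      92, 214, 215, 216, 217, 218, 98, 99, 221, 222, 223, 224, 104, 226, 227, 107, 229, 109, 231,
      111],
     [43, 163, 162, 40, 39, 38, 37, 36, 35, 34, 154, 153, 152, 151, 150, 28, 148, 147, 25, 145,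
      23, 22, 142, 141, 19, 139, 17, 16, 136, 14, 134, 12, 132, 10, 130, 129, 128, 127, 5, 125,
      124, 123, 122, 121, 241, 119, 118, 238, 237, 115, 114, 234, 112, 232, 231, 230, 108, 107,
      106, 226, 225, 103, 223, 101, 221, 99, 219, 97, 217, 95, 215, 214, 213, 91, 90, 210, 88,
      208, 207, 85, 205, 83, 203, 202, 80, 200, 78, 198, 76, 196, 74, 73, 193, 71, 191, 190, 68,
      188, 187, 186, 185, 184, 183, 61, 181, 180, 58, 178, 177, 176, 175, 174, 52, 172, 50, 49,
      169, 168, 46, 166, 165, 116, 27, 59, 212, 2, 155, 66, 98, 9, 41, 194, 105, 137, 48, 201,
      233, 144, 55, 87, 240, 30, 62, 94, 126, 158, 69, 222, 133, 44, 197, 229, 140, 51, 204, 236,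
      26, 179, 211, 1, 33, 65, 218, 8, 161, 72, 104, 15, 47, 79, 111, 143, 54, 86, 239, 29, 182,
      93, 4, 157, 189, 100, 11, 164, 75, 228, 18, 171, 82, 235, 146, 57, 89, 0, 32, 64, 96, 7,
      160, 192, 224, 135, 167, 199, 110, 21, 53, 206, 117, 149, 60, 92, 3, 156, 67, 220, 131, 42,
      195, 227, 138, 170, 81, 113, 24, 56, 209, 120, 31, 63, 216, 6, 159, 70, 102, 13, 45, 77,
      109, 20, 173, 84],
     [143, 129, 236, 222, 208, 194, 59, 166, 31, 138, 124, 110, 217, 203, 68, 54, 40, 26, 133,
      119, 226, 91, 77, 63, 49, 35, 21, 7, 235, 100, 207, 72, 58, 165, 151, 16, 123, 230, 95, 81,
      67, 174, 160, 146, 132, 239, 104, 90, 197, 183, 48, 155, 20, 6, 113, 220, 206, 192, 57, 43,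
      29, 136, 1, 108, 94, 80, 187, 173, 159, 145, 131, 238, 103, 210, 196, 182, 47, 154, 19, 126,
      233, 219, 205, 70, 56, 42, 149, 14, 0, 107, 93, 200, 186, 51, 158, 23, 130, 116, 223, 88,
      74, 181, 46, 153, 139, 4, 111, 97, 83, 190, 55, 41, 27, 134, 241, 227, 213, 199, 64, 171,
      36, 198, 184, 170, 156, 142, 128, 114, 221, 86, 193, 179, 44, 30, 137, 2, 109, 216, 202,
      188, 53, 39, 25, 11, 118, 225, 211, 76, 62, 169, 34, 141, 127, 234, 99, 85, 71, 178, 164,
      150, 15, 122, 229, 215, 201, 66, 52, 38, 24, 10, 117, 224, 89, 75, 61, 168, 33, 140, 5, 112,
      98, 84, 191, 177, 163, 28, 135, 121, 228, 214, 79, 65, 172, 37, 144, 9, 237, 102, 209, 195,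
      60, 167, 32, 18, 125, 232, 218, 204, 69, 176, 162, 148, 13, 120, 106, 92, 78, 185, 50, 157,
      22, 8, 115, 101, 87, 73, 180, 45, 152, 17, 3, 231, 96, 82, 189, 175, 161, 147, 12, 240, 105,
      212]]"

definition dca290_columns :: "int list list" where
  "dca290_columns =
    [[102, 248, 249, 250, 106, 107, 253, 254, 110, 111, 257, 113, 259, 260, 116, 262, 263, 264,
      265, 266, 122, 268, 269, 270, 271, 127, 273, 129, 275, 276, 132, 133, 134, 280, 281, 282,
      138, 139, 140, 286, 287, 288, 144, 0, 1, 147, 3, 4, 5, 151, 7, 153, 9, 155, 11, 12, 13, 14,
      160, 161, 17, 18, 19, 165, 166, 167, 23, 169, 25, 171, 27, 173, 29, 175, 31, 32, 33, 34, 35,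
      36, 37, 183, 184, 185, 186, 42, 188, 189, 190, 191, 47, 48, 49, 195, 196, 197, 53, 54, 200,
      56, 57, 203, 204, 205, 206, 207, 208, 209, 65, 66, 67, 68, 214, 70, 71, 72, 218, 219, 220,
      76, 77, 223, 224, 225, 81, 82, 228, 229, 230, 231, 232, 233, 234, 235, 236, 92, 93, 94, 95,
      96, 242, 98, 99, 245, 246, 78, 79, 80, 226, 227, 83, 84, 85, 86, 87, 88, 89, 90, 91, 237,
      238, 239, 240, 241, 97, 243, 244, 100, 101, 247, 103, 104, 105, 251, 252, 108, 109, 255,
      256, 112, 258, 114, 115, 261, 117, 118, 119, 120, 121, 267, 123, 124, 125, 126, 272, 128,
      274, 130, 131, 277, 278, 279, 135, 136, 137, 283, 284, 285, 141, 142, 143, 289, 145, 146, 2,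
      148, 149, 150, 6, 152, 8, 154, 10, 156, 157, 158, 159, 15, 16, 162, 163, 164, 20, 21, 22,
      168, 24, 170, 26, 172, 28, 174, 30, 176, 177, 178, 179, 180, 181, 182, 38, 39, 40, 41, 187,
      43, 44, 45, 46, 192, 193, 194, 50, 51, 52, 198, 199, 55, 201, 202, 58, 59, 60, 61, 62, 63,
      64, 210, 211, 212, 213, 69, 215, 216, 217, 73, 74, 75, 221, 222],
     [186, 110, 34, 248, 172, 241, 20, 89, 158, 227, 151, 75, 289, 68, 137, 61, 130, 54, 268, 192,
      116, 185, 109, 33, 247, 171, 95, 164, 88, 157, 81, 150, 219, 143, 67, 136, 205, 129, 53,
      122, 191, 260, 39, 108, 177, 246, 170, 239, 163, 232, 156, 80, 4, 73, 287, 211, 280, 59,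
      273, 197, 266, 190, 114, 183, 107, 31, 100, 24, 238, 162, 86, 10, 224, 148, 217, 141, 210,
      134, 203, 127, 196, 120, 189, 258, 37, 106, 30, 244, 23, 92, 16, 230, 154, 223, 2, 216, 285,
      209, 133, 57, 271, 195, 119, 43, 112, 36, 105, 29, 98, 22, 91, 160, 84, 8, 222, 146, 70,
      284, 63, 277, 56, 125, 49, 118, 187, 256, 180, 249, 28, 97, 166, 90, 14, 228, 7, 221, 0,
      214, 283, 207, 276, 200, 124, 48, 262, 18, 87, 11, 225, 149, 218, 142, 66, 135, 204, 128,
      52, 121, 45, 259, 38, 252, 176, 245, 169, 93, 17, 231, 155, 79, 3, 72, 286, 65, 279, 58,
      272, 51, 265, 44, 113, 182, 251, 175, 99, 168, 237, 161, 85, 9, 78, 147, 71, 140, 64, 278,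
      202, 126, 50, 264, 188, 257, 181, 250, 174, 243, 167, 236, 15, 229, 153, 77, 1, 215, 139,
      208, 132, 201, 270, 194, 263, 42, 111, 35, 104, 173, 242, 21, 235, 159, 83, 152, 76, 145,
      69, 138, 62, 131, 55, 269, 193, 117, 41, 255, 179, 103, 27, 96, 165, 234, 13, 82, 6, 220,
      144, 213, 282, 206, 275, 199, 123, 47, 261, 40, 254, 178, 102, 26, 240, 19, 233, 12, 226, 5,
      74, 288, 212, 281, 60, 274, 198, 267, 46, 115, 184, 253, 32, 101, 25, 94],
     [87, 64, 41, 163, 140, 262, 239, 216, 193, 170, 2, 269, 101, 78, 55, 32, 154, 131, 253, 85,
      62, 39, 16, 138, 115, 92, 214, 46, 168, 0, 267, 99, 221, 53, 30, 152, 274, 106, 228, 205,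
      37, 159, 136, 113, 90, 212, 44, 21, 288, 120, 97, 219, 51, 28, 150, 272, 104, 226, 58, 180,
      12, 279, 256, 88, 210, 42, 164, 286, 118, 240, 217, 194, 26, 3, 270, 102, 224, 56, 178, 155,
      132, 254, 86, 63, 185, 17, 139, 116, 93, 70, 192, 24, 1, 123, 100, 77, 199, 176, 8, 275,
      252, 229, 206, 38, 160, 137, 114, 91, 213, 45, 167, 144, 266, 98, 75, 197, 174, 6, 128, 250,
      82, 59, 181, 13, 135, 112, 89, 66, 188, 20, 287, 264, 241, 218, 50, 27, 4, 271, 103, 225,
      57, 34, 11, 278, 110, 211, 43, 165, 142, 119, 96, 73, 195, 172, 149, 126, 248, 80, 202, 179,
      156, 133, 255, 232, 209, 186, 18, 285, 117, 94, 71, 48, 25, 147, 124, 246, 223, 200, 177, 9,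
      276, 108, 230, 207, 184, 161, 283, 260, 237, 69, 191, 23, 145, 122, 244, 76, 198, 175, 7,
      129, 251, 83, 60, 182, 14, 281, 258, 235, 67, 189, 166, 143, 265, 242, 74, 196, 173, 5, 127,
      249, 81, 203, 35, 157, 134, 111, 233, 65, 187, 19, 141, 263, 95, 72, 49, 171, 148, 125, 247,
      79, 201, 33, 10, 277, 109, 231, 208, 40, 162, 284, 261, 238, 215, 47, 169, 146, 268, 245,
      222, 54, 31, 153, 130, 107, 84, 61, 183, 15, 282, 259, 236, 68, 190, 22, 289, 121, 243, 220,
      52, 29, 151, 273, 105, 227, 204, 36, 158, 280, 257, 234]]"

definition dca338_columns :: "int list list" where
  "dca338_columns =
    [[38, 39, 209, 41, 211, 212, 213, 45, 46, 216, 217, 218, 219, 51, 221, 53, 54, 224, 225, 57,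
      227, 228, 60, 61, 62, 63, 64, 234, 66, 236, 68, 69, 70, 240, 72, 73, 243, 75, 245, 77, 247,
      248, 249, 250, 82, 252, 253, 85, 255, 256, 257, 258, 259, 91, 261, 93, 263, 264, 96, 266,
      267, 99, 100, 101, 102, 103, 273, 274, 275, 276, 277, 109, 279, 280, 112, 113, 283, 115,
      116, 286, 287, 288, 120, 290, 291, 123, 293, 294, 126, 296, 297, 129, 299, 131, 132, 133,
      303, 135, 305, 137, 307, 139, 309, 310, 311, 312, 144, 314, 146, 316, 317, 318, 150, 151,
      321, 153, 154, 324, 325, 157, 158, 159, 160, 330, 162, 163, 164, 334, 166, 167, 168, 0, 170,
      2, 172, 173, 174, 6, 7, 8, 9, 179, 11, 181, 13, 183, 184, 185, 17, 187, 19, 189, 21, 191,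
      192, 193, 194, 195, 27, 28, 198, 30, 200, 32, 33, 203, 204, 36, 206, 169, 1, 171, 3, 4, 5,
      175, 176, 177, 178, 10, 180, 12, 182, 14, 15, 16, 186, 18, 188, 20, 190, 22, 23, 24, 25, 26,
      196, 197, 29, 199, 31, 201, 202, 34, 35, 205, 37, 207, 208, 40, 210, 42, 43, 44, 214, 215,
      47, 48, 49, 50, 220, 52, 222, 223, 55, 56, 226, 58, 59, 229, 230, 231, 232, 233, 65, 235,
      67, 237, 238, 239, 71, 241, 242, 74, 244, 76, 246, 78, 79, 80, 81, 251, 83, 84, 254, 86, 87,
      88, 89, 90, 260, 92, 262, 94, 95, 265, 97, 98, 268, 269, 270, 271, 272, 104, 105, 106, 107,
      108, 278, 110, 111, 281, 282, 114, 284, 285, 117, 118, 119, 289, 121, 122, 292, 124, 125,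
      295, 127, 128, 298, 130, 300, 301, 302, 134, 304, 136, 306, 138, 308, 140, 141, 142, 143,
      313, 145, 315, 147, 148, 149, 319, 320, 152, 322, 323, 155, 156, 326, 327, 328, 329, 161,
      331, 332, 333, 165, 335, 336, 337],
     [296, 249, 33, 155, 108, 61, 14, 136, 89, 211, 333, 117, 239, 23, 145, 267, 51, 4, 126, 248,
      201, 154, 276, 229, 13, 304, 88, 210, 332, 116, 69, 22, 313, 266, 50, 3, 294, 78, 200, 153,
      106, 59, 12, 303, 87, 209, 331, 115, 237, 21, 143, 265, 218, 2, 124, 77, 199, 152, 105, 227,
      11, 302, 255, 39, 330, 114, 67, 189, 311, 264, 48, 1, 123, 245, 198, 151, 104, 226, 179,
      301, 254, 207, 329, 113, 235, 19, 310, 94, 216, 169, 122, 244, 197, 319, 272, 56, 9, 131,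
      253, 37, 159, 281, 234, 187, 309, 262, 46, 168, 121, 243, 196, 149, 271, 224, 177, 299, 83,
      205, 158, 111, 233, 186, 308, 261, 45, 167, 289, 242, 26, 317, 101, 223, 7, 129, 251, 35,
      157, 110, 63, 16, 307, 91, 213, 335, 288, 72, 25, 316, 269, 53, 6, 297, 250, 203, 325, 109,
      62, 184, 306, 259, 43, 334, 287, 71, 193, 146, 99, 221, 174, 321, 274, 58, 180, 133, 86,
      208, 161, 283, 236, 20, 142, 95, 217, 170, 292, 76, 29, 320, 273, 57, 10, 132, 85, 38, 160,
      282, 66, 188, 141, 263, 47, 0, 291, 75, 28, 150, 103, 225, 178, 300, 84, 206, 328, 112, 65,
      18, 140, 93, 215, 337, 290, 74, 27, 318, 102, 55, 8, 130, 252, 36, 327, 280, 64, 17, 139,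
      92, 214, 336, 120, 73, 195, 148, 270, 54, 176, 298, 82, 204, 326, 279, 232, 185, 138, 260,
      44, 166, 119, 241, 194, 147, 100, 222, 175, 128, 81, 34, 156, 278, 231, 15, 137, 90, 212,
      165, 118, 240, 24, 315, 268, 52, 5, 127, 80, 202, 324, 277, 230, 183, 305, 258, 42, 164,
      286, 70, 192, 314, 98, 220, 173, 295, 79, 32, 323, 107, 60, 182, 135, 257, 41, 163, 285,
      238, 191, 144, 97, 219, 172, 125, 247, 31, 322, 275, 228, 181, 134, 256, 40, 162, 284, 68,
      190, 312, 96, 49, 171, 293, 246, 30],
     [274, 121, 137, 153, 169, 16, 201, 217, 64, 80, 96, 281, 128, 144, 329, 176, 192, 208, 224,
      71, 256, 103, 119, 135, 151, 167, 183, 30, 215, 62, 78, 263, 279, 126, 311, 327, 174, 21,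
      206, 53, 69, 85, 101, 117, 133, 149, 334, 181, 197, 213, 229, 245, 261, 277, 293, 140, 156,
      3, 19, 35, 51, 236, 83, 268, 115, 300, 316, 163, 10, 195, 42, 227, 74, 259, 106, 291, 138,
      323, 170, 186, 202, 49, 65, 250, 266, 113, 298, 314, 161, 8, 193, 40, 225, 241, 257, 104,
      289, 305, 321, 168, 184, 31, 47, 232, 248, 95, 280, 127, 143, 328, 175, 191, 38, 54, 239,
      86, 271, 287, 134, 319, 335, 182, 29, 214, 61, 246, 93, 278, 294, 141, 326, 4, 20, 205, 52,
      68, 84, 100, 116, 132, 317, 333, 180, 196, 212, 228, 244, 91, 107, 123, 139, 155, 2, 187,
      203, 50, 235, 251, 267, 114, 299, 146, 162, 9, 25, 210, 57, 242, 89, 178, 324, 301, 109,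
      255, 63, 209, 17, 332, 309, 286, 94, 240, 48, 194, 171, 148, 125, 102, 79, 56, 33, 179, 325,
      302, 110, 87, 233, 41, 18, 164, 310, 118, 264, 72, 218, 26, 172, 318, 295, 272, 249, 226,
      34, 11, 157, 303, 111, 88, 234, 211, 188, 165, 142, 288, 265, 73, 219, 27, 173, 150, 296,
      273, 81, 58, 204, 12, 158, 304, 112, 258, 66, 43, 189, 166, 312, 120, 97, 243, 220, 28, 5,
      320, 297, 105, 82, 59, 36, 13, 159, 136, 282, 90, 67, 44, 190, 336, 313, 290, 98, 75, 221,
      198, 6, 152, 129, 275, 252, 60, 37, 14, 160, 306, 283, 260, 237, 45, 22, 337, 145, 122, 99,
      76, 222, 199, 7, 322, 130, 276, 253, 230, 207, 15, 330, 307, 284, 92, 238, 46, 23, 0, 315,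
      292, 269, 77, 223, 200, 177, 154, 131, 108, 254, 231, 39, 185, 331, 308, 285, 262, 70, 216,
      24, 1, 147, 124, 270, 247, 55, 32]]"

lemma difference_columns_dca50: "difference_columns 50 dca50_columns"
  unfolding dca50_columns_def difference_columns_def by code_simp

lemma difference_columns_dca98: "difference_columns 98 dca98_columns"
  unfolding dca98_columns_def difference_columns_def by code_simp

lemma difference_columns_dca170: "difference_columns 170 dca170_columns"
  unfolding dca170_columns_def difference_columns_def by code_simp

lemma difference_columns_dca242: "difference_columns 242 dca242_columns"
  unfolding dca242_columns_def difference_columns_def by code_simp

lemma difference_columns_dca290: "difference_columns 290 dca290_columns"
  unfolding dca290_columns_def difference_columns_def by code_simp

lemma difference_columns_dca338: "difference_columns 338 dca338_columns"
  unfolding dca338_columns_def difference_columns_def by code_simp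

theorem mainTheorem9:
  shows "\<forall>n::nat \<in> {50, 98, 170, 242, 290, 338}.
           \<exists>Q. normalized_DCA 4 n Q \<and> DCA_P1 4 n Q \<and> DCA_P2 4 n Q"
proof -
  have DCA: "\<exists>Q. normalized_DCA 4 n Q \<and> DCA_P1 4 n Q \<and> DCA_P2 4 n Q"
    if "difference_columns n cols" and "length cols = 3" and "n \<ge> 1" for n cols
    using exists_DCA_of_difference_columns[OF that(3,1)] that(2) by simp
  show ?thesis
    using DCA[OF difference_columns_dca50] DCA[OF difference_columns_dca98]
      DCA[OF difference_columns_dca170] DCA[OF difference_columns_dca242]
      DCA[OF difference_columns_dca290] DCA[OF difference_columns_dca338]
    by (simp add: dca50_columns_def dca98_columns_def dca170_columns_def dca242_columns_def
        dca290_columns_def dca338_columns_def)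
qed

end
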